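(* Let $M$ be a proper metric space and $X_1,\dots,X_n$ a coarsely transverse collection of half spaces in $M$. For $\sigma\in S_n$ put $A_0^\sigma=X_{\sigma_1}\cdots X_{\sigma_n}$ and $A_i^\sigma=X_{\sigma_i}^cX_{\sigma_{i+1}}\cdots X_{\sigma_n}$ ($i=1,\dots,n$), products of indicator functions. Then in $HX^n(M)$, $$[\mathbf 1\wedge X_1\wedge\dots\wedge X_n]=(-1)^n\sum_{\sigma\in S_n}\mathrm{sgn}(\sigma)\,[A_0^\sigma\wedge\dots\wedge A_n^\sigma].$$
   Context: Borel sets are identified with their indicator functions; $\mathbf 1$ is the constant function $1$. For $Y\subseteq M$, $Y_R=\{x:d(x,Y)\le R\}$. Borel sets $X_1,\dots,X_n$ form a coarsely transverse collection of half spaces if $\bigcap_i (X_i)_R\cap(X_i^c)_R$ is bounded for all $R\ge0$. Coarse cohomology: equip $M^{n+1}$ with the max metric, let $\Delta\subset M^{n+1}$ be the multi-diagonal and $\Delta_R$ its $R$-thickening. $CX^n(M)$ is the space of locally bounded Borel functions $\theta:M^{n+1}\to\mathbb{C}$ such that $\mathrm{supp}(\theta)\cap\Delta_R$ is bounded for every $R>0$, with differential $\delta\theta=\sum_{i=0}^{n+1}(-1)^i\pi_i^*\theta$ ($\pi_i:M^{n+2}\to M^{n+1}$ omits the $i$-th coordinate); $HX^n(M)$ is its cohomology (equivalently, that of the subcomplex of anti-symmetric cochains). For bounded Borel functions $f_0,\dots,f_n$, $f_0\wedge\dots\wedge f_n=\sum_{\sigma\in S_{n+1}}\mathrm{sgn}(\sigma)f_{\sigma_0}\otimes\dots\otimes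 f_{\sigma_n}$. Both sides' cochains are coarse cocycles under the hypothesis. *)

theory Defs
  imports "HOL-Analysis.Analysis" "HOL-Combinatorics.Permutations"
begin

text \<open>Tuples in M^(k+1) are represented as extensional functions on {..k}.\<close>

abbreviation tuples :: "nat \<Rightarrow> (nat \<Rightarrow> 'a) set" where
  "tuples k \<equiv> PiE {..k} (\<lambda>_. UNIV)"

text \<open>R-thickening Y_R = {x. d(x,Y) \<le> R} (empty for empty Y, as d(x,{}) = \<infinity>).\<close>
definition thick :: "real \<Rightarrow> 'a::metric_space set \<Rightarrow> 'a set" where
  "thick R Y = {x. Y \<noteq> {} \<and> infdist x Y \<le> R}"

definition coarsely_transverse :: "nat \<Rightarrow> (nat \<Rightarrow> 'a::metric_space set) \<Rightarrow> bool" where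
  "coarsely_transverse n X \<longleftrightarrow>
     (\<forall>i\<in>{1..n}. X i \<in> sets borel) \<and>
     (\<forall>R\<ge>0. bounded (\<Inter>i\<in>{1..n}. thick R (X i) \<inter> thick R (- X i)))"

definition bounded_tuples :: "nat \<Rightarrow> (nat \<Rightarrow> 'a::metric_space) set \<Rightarrow> bool" where
  "bounded_tuples k S \<longleftrightarrow> (\<exists>c r. \<forall>x\<in>S. \<forall>i\<le>k. dist c (x i) \<le> r)"

definition diag_dist :: "nat \<Rightarrow> (nat \<Rightarrow> 'a::metric_space) \<Rightarrow> real" where
  "diag_dist k x = (INF z. Max ((\<lambda>i. dist (x i) z) ` {..k}))"

definition diag_thick :: "nat \<Rightarrow> real \<Rightarrow> (nat \<Rightarrow> 'a::metric_space) set" where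
  "diag_thick k R = {x \<in> tuples k. diag_dist k x \<le> R}"

definition supp_cochain :: "nat \<Rightarrow> ((nat \<Rightarrow> 'a) \<Rightarrow> complex) \<Rightarrow> (nat \<Rightarrow> 'a) set" where
  "supp_cochain k \<theta> = {x \<in> tuples k. \<theta> x \<noteq> 0}"

definition CX :: "nat \<Rightarrow> ((nat \<Rightarrow> 'a::metric_space) \<Rightarrow> complex) set" where
  "CX k = {\<theta>.
     \<theta> \<in> borel_measurable (PiM {..k} (\<lambda>_. borel)) \<and>
     (\<forall>S. S \<subseteq> tuples k \<longrightarrow> bounded_tuples k S \<longrightarrow> (\<exists>K. \<forall>x\<in>S. norm (\<theta> x) \<le> K)) \<and>
     (\<forall>R>0. bounded_tuples k (supp_cochain k \<theta> \<inter> diag_thick k R))}"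

definition omit :: "nat \<Rightarrow> nat \<Rightarrow> (nat \<Rightarrow> 'a) \<Rightarrow> (nat \<Rightarrow> 'a)" where
  "omit k i x = restrict (\<lambda>j. if j < i then x j else x (Suc j)) {..k}"

definition cobound :: "nat \<Rightarrow> ((nat \<Rightarrow> 'a) \<Rightarrow> complex) \<Rightarrow> ((nat \<Rightarrow> 'a) \<Rightarrow> complex)" where
  "cobound k \<theta> = (\<lambda>x. \<Sum>i\<le>Suc k. (-1) ^ i * \<theta> (omit k i x))"

definition coarse_cocycle :: "nat \<Rightarrow> ((nat \<Rightarrow> 'a::metric_space) \<Rightarrow> complex) \<Rightarrow> bool" where
  "coarse_cocycle k \<theta> \<longleftrightarrow> \<theta> \<in> CX k \<and> (\<forall>x\<in>tuples (Suc k). cobound k \<theta> x = 0)"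

text \<open>Equality of cohomology classes [\<theta>1] = [\<theta>2] in HX^k(M) (CX^(-1) = 0).\<close>
definition HX_eq :: "nat \<Rightarrow> ((nat \<Rightarrow> 'a::metric_space) \<Rightarrow> complex) \<Rightarrow> ((nat \<Rightarrow> 'a) \<Rightarrow> complex) \<Rightarrow> bool" where
  "HX_eq k \<theta>1 \<theta>2 \<longleftrightarrow> coarse_cocycle k \<theta>1 \<and> coarse_cocycle k \<theta>2 \<and>
     (if k = 0 then (\<forall>x\<in>tuples k. \<theta>1 x = \<theta>2 x)
      else (\<exists>\<psi>\<in>CX (k - 1). \<forall>x\<in>tuples k. \<theta>1 x - \<theta>2 x = cobound (k - 1) \<psi> x))"

definition wedge :: "nat \<Rightarrow> (nat \<Rightarrow> 'a \<Rightarrow> complex) \<Rightarrow> ((nat \<Rightarrow> 'a) \<Rightarrow> complex)" where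
  "wedge k f = (\<lambda>x. \<Sum>\<sigma>\<in>{\<sigma>. \<sigma> permutes {..k}}. of_int (sign \<sigma>) * (\<Prod>j\<le>k. f (\<sigma> j) (x j)))"

definition ind :: "'a set \<Rightarrow> 'a \<Rightarrow> complex" where
  "ind Y = indicator Y"

definition A_fun :: "nat \<Rightarrow> (nat \<Rightarrow> 'a set) \<Rightarrow> (nat \<Rightarrow> nat) \<Rightarrow> nat \<Rightarrow> 'a \<Rightarrow> complex" where
  "A_fun n X \<sigma> i = (\<lambda>y. (if i = 0 then 1 else ind (- X (\<sigma> i)) y) * (\<Prod>j\<in>{i+1..n}. ind (X (\<sigma> j)) y))"

end

theory Submission
  imports Defs "Jordan_Normal_Form.Determinant"
begin

text \<open>Both cochains factor through the pattern map, which sends a point to the set of indices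
  \<open>i\<close> with the point in \<open>X\<^sub>i\<close>; so they are pullbacks of cochains on tuples of subsets of
  \<open>{1..n}\<close>. There both are cocycles that vanish on unsplit tuples, those whose vertices all
  lie in, or all avoid, some \<open>X\<^sub>i\<close>; and on a complete flag
  \<open>{1..n} = t\<^sub>0 \<supset> \<dots> \<supset> t\<^sub>n = {}\<close> both take the value \<open>(-1)\<^sup>n\<close> times the sign of the
  permutation in which the flag removes the indices. A relative cocycle vanishing on complete
  flags is a relative coboundary: by induction on \<open>n\<close>, using the prism homotopy that adjoins
  \<open>n\<close> to every vertex. Pulling the primitive back gives a coarse cochain, because near the
  diagonal the tuples split by every \<open>X\<^sub>i\<close> stay close to the bounded set where all the
  thickened boundaries meet.\<close>

section \<open>Coboundary and the prism operator\<close>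

definition face :: "nat \<Rightarrow> (nat \<Rightarrow> 'v) \<Rightarrow> nat \<Rightarrow> 'v" where
  "face i t = (\<lambda>j. if j < i then t j else t (Suc j))"

definition coboundary :: "nat \<Rightarrow> ((nat \<Rightarrow> 'v) \<Rightarrow> complex) \<Rightarrow> (nat \<Rightarrow> 'v) \<Rightarrow> complex" where
  "coboundary k \<omega> = (\<lambda>t. \<Sum>i\<le>Suc k. (-1)^i * \<omega> (face i t))"

lemma face_Diff: "face i (\<lambda>l. t l - A) = (\<lambda>l. face i t l - A)"
  by (auto simp: face_def fun_eq_iff)

lemma face_face: "i \<le> i' \<Longrightarrow> face i' (face i t) = face i (face (Suc i') t)"
  by (auto simp: face_def fun_eq_iff)

lemma power_neg_one_pred: "0 < m \<Longrightarrow> (-1::'a::ring_1)^(m - Suc 0) = - ((-1)^m)"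
  by (cases m) auto

lemma coboundary_coboundary: "coboundary (Suc k) (coboundary k \<phi>) t = 0"
proof -
  let ?g = "\<lambda>(i, i'). (-1::complex)^(i + i') * \<phi> (face i' (face i t))"
  define P1 where "P1 = {(i, i'). i \<le> i' \<and> i' \<le> Suc k}"
  define P2 where "P2 = {(i, i'). i' < i \<and> i \<le> Suc (Suc k)}"
  have "coboundary (Suc k) (coboundary k \<phi>) t = sum ?g ({..Suc (Suc k)} \<times> {..Suc k})"
    unfolding coboundary_def sum_distrib_left sum.cartesian_product
    by (intro sum.cong refl) (auto simp: power_add)
  also have "{..Suc (Suc k)} \<times> {..Suc k} = P1 \<union> P2"
    by (auto simp: P1_def P2_def)
  also have "sum ?g (P1 \<union> P2) = sum ?g P1 + sum ?g P2"
    by (rule sum.union_disjoint)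
       (auto simp: P1_def P2_def intro: finite_subset[of _ "{..Suc (Suc k)} \<times> {..Suc k}"])
  also have "sum ?g P2 = sum (\<lambda>p. - ?g p) P1"
    by (rule sum.reindex_bij_witness[where j = "\<lambda>(i, i'). (i', i - 1)" and i = "\<lambda>(i, i'). (Suc i', i)"])
       (auto simp: P1_def P2_def face_face add.commute power_neg_one_pred)
  finally show ?thesis
    by (simp add: sum_negf)
qed

lemma coboundary_diff: "coboundary k (\<lambda>t. f t - g t) t = coboundary k f t - coboundary k g t"
  by (simp add: coboundary_def sum_subtractf right_diff_distrib)

text \<open>The prism operator is the chain homotopy, on the nerve of the subsets of \<open>\<nat>\<close>,
  between the identity and the map adjoining \<open>N\<close> to every vertex; \<open>prism_simplex N j t\<close>
  is the \<open>j\<close>-th simplex of the standard triangulation of \<open>t \<times> [0, 1]\<close>.\<close>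

definition prism_simplex :: "nat \<Rightarrow> nat \<Rightarrow> (nat \<Rightarrow> nat set) \<Rightarrow> nat \<Rightarrow> nat set" where
  "prism_simplex N j t = (\<lambda>l. if l \<le> j then insert N (t l) else t (l - 1))"

definition prism :: "nat \<Rightarrow> nat \<Rightarrow> ((nat \<Rightarrow> nat set) \<Rightarrow> complex) \<Rightarrow> (nat \<Rightarrow> nat set) \<Rightarrow> complex" where
  "prism N k \<omega> = (\<lambda>t. \<Sum>j<k. (-1)^j * \<omega> (prism_simplex N j t))"

definition insert_below :: "nat \<Rightarrow> nat \<Rightarrow> (nat \<Rightarrow> nat set) \<Rightarrow> nat \<Rightarrow> nat set" where
  "insert_below N j t = (\<lambda>l. if l < j then insert N (t l) else t l)"

lemma face_prism_simplex_less: "i < j \<Longrightarrow> face i (prism_simplex N j t) = prism_simplex N (j - 1) (face i t)"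
  by (auto simp: face_def prism_simplex_def fun_eq_iff)

lemma face_prism_simplex_greater:
  "Suc j < i \<Longrightarrow> face i (prism_simplex N j t) = prism_simplex N j (face (i - 1) t)"
  by (auto simp: face_def prism_simplex_def fun_eq_iff)

lemma face_prism_simplex_eq: "face j (prism_simplex N j t) = insert_below N j t"
  by (auto simp: face_def prism_simplex_def insert_below_def fun_eq_iff)

lemma face_Suc_prism_simplex: "face (Suc j) (prism_simplex N j t) = insert_below N (Suc j) t"
  by (auto simp: face_def prism_simplex_def insert_below_def fun_eq_iff)

lemma insert_below_0 [simp]: "insert_below N 0 t = t"
  by (auto simp: insert_below_def fun_eq_iff)

lemma sum_atMost_Suc_split:
  fixes g :: "nat \<Rightarrow> 'a::comm_monoid_add"
  assumes "j \<le> K"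
  shows "(\<Sum>i\<le>Suc K. g i) = (\<Sum>i<j. g i) + g j + g (Suc j) + (\<Sum>i\<in>{Suc j..K}. g (Suc i))"
proof -
  have "{..Suc K} = {..<j} \<union> {j..Suc K}" "{..<j} \<inter> {j..Suc K} = {}"
    using assms by auto
  then have "(\<Sum>i\<le>Suc K. g i) = (\<Sum>i<j. g i) + (\<Sum>i\<in>{j..Suc K}. g i)"
    by (simp add: sum.union_disjoint)
  moreover have "{j..Suc K} = insert j (insert (Suc j) {Suc (Suc j)..Suc K})"
    using assms by auto
  moreover have "(\<Sum>i\<in>{Suc (Suc j)..Suc K}. g i) = (\<Sum>i\<in>{Suc j..K}. g (Suc i))"
    by (rule sum.shift_bounds_cl_Suc_ivl)
  ultimately show ?thesis
    by (simp add: add.assoc)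
qed

lemma coboundary_prism_simplex:
  fixes \<omega> :: "(nat \<Rightarrow> nat set) \<Rightarrow> complex" and N :: nat and t :: "nat \<Rightarrow> nat set"
  defines "F \<equiv> \<lambda>i j. (-1)^(i + j) * \<omega> (prism_simplex N j (face i t))"
  assumes "j \<le> K"
  shows "(-1)^j * coboundary K \<omega> (prism_simplex N j t) =
    - (\<Sum>i<j. F i (j - 1)) + (\<omega> (insert_below N j t) - \<omega> (insert_below N (Suc j) t))
    - (\<Sum>i\<in>{Suc j..K}. F i j)"
proof -
  have below: "(-1)^j * ((-1)^i * \<omega> (face i (prism_simplex N j t))) = - F i (j - 1)" if "i < j" for i
    using that by (simp add: F_def power_add face_prism_simplex_less power_neg_one_pred)
  have above: "(-1)^j * ((-1)^i * \<omega> (face (Suc i) (prism_simplex N j t))) = F i j"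
    if "Suc j \<le> i" for i
    using that by (simp add: F_def power_add face_prism_simplex_greater)
  have "(-1)^j * coboundary K \<omega> (prism_simplex N j t) =
      (\<Sum>i<j. (-1)^j * ((-1)^i * \<omega> (face i (prism_simplex N j t))))
      + ((-1)^j * (-1)^j) * \<omega> (insert_below N j t) - ((-1)^j * (-1)^j) * \<omega> (insert_below N (Suc j) t)
      + (\<Sum>i\<in>{Suc j..K}. (-1)^j * ((-1)^Suc i * \<omega> (face (Suc i) (prism_simplex N j t))))"
    unfolding coboundary_def sum_atMost_Suc_split[OF assms(2)]
    by (simp add: algebra_simps sum_distrib_left face_prism_simplex_eq face_Suc_prism_simplex
        del: sum.atMost_Suc)
  also have "(-1::complex)^j * (-1)^j = 1"
    by (simp add: power_mult_distrib[symmetric])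
  also have "(\<Sum>i<j. (-1)^j * ((-1)^i * \<omega> (face i (prism_simplex N j t)))) = - (\<Sum>i<j. F i (j - 1))"
    unfolding sum_negf[symmetric] by (rule sum.cong) (auto simp: below)
  also have "(\<Sum>i\<in>{Suc j..K}. (-1)^j * ((-1)^Suc i * \<omega> (face (Suc i) (prism_simplex N j t))))
      = - (\<Sum>i\<in>{Suc j..K}. F i j)"
    by (simp add: sum_negf[symmetric] above)
  finally show ?thesis
    by simp
qed

lemma prism_homotopy:
  "coboundary k (prism N (Suc k) \<omega>) t + prism N (Suc (Suc k)) (coboundary (Suc k) \<omega>) t
     = \<omega> t - \<omega> (insert_below N (Suc (Suc k)) t)"
proof -
  define K where "K = Suc k"
  define F where "F i j = (-1::complex)^(i + j) * \<omega> (prism_simplex N j (face i t))" for i j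
  have "coboundary k (prism N K \<omega>) t = (\<Sum>j<K. \<Sum>i\<le>K. F i j)"
    unfolding coboundary_def prism_def F_def K_def sum_distrib_left
    by (subst sum.swap) (simp add: power_add mult.assoc)
  also have "\<dots> = (\<Sum>j<K. \<Sum>i\<le>j. F i j) + (\<Sum>j<K. \<Sum>i\<in>{Suc j..K}. F i j)"
    unfolding sum.distrib[symmetric]
  proof (intro sum.cong refl)
    fix j assume "j \<in> {..<K}"
    then have "{..K} = {..j} \<union> {Suc j..K}"
      by auto
    then show "(\<Sum>i\<le>K. F i j) = (\<Sum>i\<le>j. F i j) + (\<Sum>i\<in>{Suc j..K}. F i j)"
      by (simp add: sum.union_disjoint)
  qed
  finally have cob: "coboundary k (prism N K \<omega>) t =
      (\<Sum>j<K. \<Sum>i\<le>j. F i j) + (\<Sum>j<K. \<Sum>i\<in>{Suc j..K}. F i j)" .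
  have "prism N (Suc K) (coboundary K \<omega>) t =
      (\<Sum>j\<le>K. - (\<Sum>i<j. F i (j - 1)) + (\<omega> (insert_below N j t) - \<omega> (insert_below N (Suc j) t))
        - (\<Sum>i\<in>{Suc j..K}. F i j))"
    unfolding prism_def lessThan_Suc_atMost F_def
    by (intro sum.cong refl coboundary_prism_simplex) auto
  also have "\<dots> = - (\<Sum>j\<le>K. \<Sum>i<j. F i (j - 1))
      + (\<Sum>j\<le>K. \<omega> (insert_below N j t) - \<omega> (insert_below N (Suc j) t))
      - (\<Sum>j\<le>K. \<Sum>i\<in>{Suc j..K}. F i j)"
    by (simp add: sum.distrib sum_subtractf sum_negf)
  also have "(\<Sum>j\<le>K. \<Sum>i<j. F i (j - 1)) = (\<Sum>j<K. \<Sum>i\<le>j. F i j)"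
    unfolding K_def sum.atMost_Suc_shift by (simp add: lessThan_Suc_atMost del: sum.lessThan_Suc)
  also have "(\<Sum>j\<le>K. \<omega> (insert_below N j t) - \<omega> (insert_below N (Suc j) t))
      = \<omega> t - \<omega> (insert_below N (Suc K) t)"
    using sum_telescope[of "\<lambda>j. \<omega> (insert_below N j t)" K] by simp
  also have "(\<Sum>j\<le>K. \<Sum>i\<in>{Suc j..K}. F i j) = (\<Sum>j<K. \<Sum>i\<in>{Suc j..K}. F i j)"
    by (simp add: lessThan_Suc_atMost[symmetric])
  finally show ?thesis
    using cob by (simp add: K_def algebra_simps)
qed

section \<open>Relative cocycles on the pattern complex\<close>

definition univ_half :: "nat \<Rightarrow> nat set set" where
  "univ_half i = {v. i \<in> v}"

lemma mem_univ_half [simp]: "v \<in> univ_half i \<longleftrightarrow> i \<in> v"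
  by (simp add: univ_half_def)

definition unsplit :: "nat \<Rightarrow> (nat \<Rightarrow> 'a set) \<Rightarrow> nat \<Rightarrow> (nat \<Rightarrow> 'a) \<Rightarrow> bool" where
  "unsplit n X k x \<longleftrightarrow> (\<exists>i\<in>{1..n}. (\<forall>j\<le>k. x j \<in> X i) \<or> (\<forall>j\<le>k. x j \<notin> X i))"

lemma unsplit_face: "unsplit n X (Suc k) x \<Longrightarrow> unsplit n X k (face i x)"
  unfolding unsplit_def face_def by (metis Suc_le_mono le_SucI)

definition complete_flag :: "nat \<Rightarrow> (nat \<Rightarrow> nat set) \<Rightarrow> bool" where
  "complete_flag n t \<longleftrightarrow>
     t n = {} \<and> (\<forall>j<n. \<exists>a\<in>{1..n}. a \<notin> t (Suc j) \<and> t j = insert a (t (Suc j)))"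

definition determined_upto :: "nat \<Rightarrow> ((nat \<Rightarrow> 'v) \<Rightarrow> complex) \<Rightarrow> bool" where
  "determined_upto k \<omega> \<longleftrightarrow> (\<forall>t t'. (\<forall>j\<le>k. t j = t' j) \<longrightarrow> \<omega> t = \<omega> t')"

definition relative_coboundary :: "nat \<Rightarrow> ((nat \<Rightarrow> nat set) \<Rightarrow> complex) \<Rightarrow> bool" where
  "relative_coboundary m \<omega> \<longleftrightarrow>
     (\<exists>\<Psi>. (\<forall>t. unsplit (Suc m) univ_half m t \<longrightarrow> \<Psi> t = 0) \<and> (\<forall>t. coboundary m \<Psi> t = \<omega> t))"

lemma complete_flag_subset: "complete_flag n t \<Longrightarrow> l \<le> n \<Longrightarrow> t l \<subseteq> {1..n}"
proof (induction "n - l" arbitrary: l)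
  case 0
  then show ?case by (simp add: complete_flag_def)
next
  case (Suc d)
  then have "t (Suc l) \<subseteq> {1..n}" by simp
  moreover obtain a where "a \<in> {1..n}" "t l = insert a (t (Suc l))"
    using Suc.prems Suc.hyps(2) unfolding complete_flag_def by (metis zero_less_Suc zero_less_diff)
  ultimately show ?case by simp
qed

lemma complete_flag_diff_Suc:
  assumes "complete_flag n t"
  shows "complete_flag n (\<lambda>l. t l - {Suc n})"
proof -
  have "t l - {Suc n} = t l" if "l \<le> n" for l
    using complete_flag_subset[OF assms that] by auto
  with assms show ?thesis
    unfolding complete_flag_def by (metis Suc_leI order.refl less_imp_le)
qed

lemma complete_flag_prism_simplex:
  assumes "complete_flag m t" "j \<le> m"
  shows "complete_flag (Suc m) (prism_simplex (Suc m) j t)"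
proof -
  let ?s = "prism_simplex (Suc m) j t"
  have notin: "Suc m \<notin> t l" if "l \<le> m" for l
    using complete_flag_subset[OF assms(1) that] by auto
  have step: "\<exists>a\<in>{1..Suc m}. a \<notin> ?s (Suc l) \<and> ?s l = insert a (?s (Suc l))" if "l < Suc m" for l
  proof (cases "l = j")
    case True
    then show ?thesis
      using notin[of j] assms(2) by (intro bexI[of _ "Suc m"]) (auto simp: prism_simplex_def)
  next
    case False
    define l' where "l' = (if l < j then l else l - 1)"
    have "l' < m" "?s l = (if l < j then insert (Suc m) (t l') else t l')"
      "?s (Suc l) = (if l < j then insert (Suc m) (t (Suc l')) else t (Suc l'))"
      using False that assms(2) by (auto simp: l'_def prism_simplex_def)
    moreover obtain a where "a \<in> {1..m}" "a \<notin> t (Suc l')" "t l' = insert a (t (Suc l'))"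
      using assms(1) \<open>l' < m\<close> unfolding complete_flag_def by auto
    ultimately show ?thesis
      by (intro bexI[of _ a]) auto
  qed
  have "?s (Suc m) = {}"
    using assms by (simp add: prism_simplex_def complete_flag_def)
  with step show ?thesis
    unfolding complete_flag_def by blast
qed

lemma cocycle_vanishing_on_flags_0:
  assumes "\<And>t. coboundary 0 \<omega> t = 0" and "\<And>t. complete_flag 0 t \<Longrightarrow> \<omega> t = 0"
  shows "\<omega> t = 0"
proof -
  have "face 0 (case_nat {} t) = t" "complete_flag 0 (face 1 (case_nat {} t))"
    by (auto simp: face_def complete_flag_def)
  then show ?thesis
    using assms(1)[of "case_nat {} t"] assms(2) by (simp add: coboundary_def)
qed

text \<open>Its prism \<open>\<eta>\<close> is a primitive that vanishes on the tuples unsplit by one of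
  the indices \<open>1, \<dots>, m\<close> or all containing \<open>m + 1\<close>; on the tuples avoiding \<open>m + 1\<close> it agrees
  with \<open>\<beta>\<close>, a relative cocycle one degree and one index lower.\<close>

locale relative_cocycle =
  fixes m :: nat and \<omega> :: "(nat \<Rightarrow> nat set) \<Rightarrow> complex"
  assumes determined: "determined_upto (Suc m) \<omega>"
    and vanishes_unsplit: "\<And>t. unsplit (Suc m) univ_half (Suc m) t \<Longrightarrow> \<omega> t = 0"
    and cocycle: "\<And>t. coboundary (Suc m) \<omega> t = 0"
begin

abbreviation \<eta> where "\<eta> \<equiv> prism (Suc m) (Suc m) \<omega>"

lemma coboundary_eta: "coboundary m \<eta> t = \<omega> t"
proof -
  have "\<omega> (insert_below (Suc m) (Suc (Suc m)) t) = 0"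
    by (rule vanishes_unsplit) (auto simp: unsplit_def insert_below_def)
  then show ?thesis
    using prism_homotopy[of m "Suc m" \<omega> t] by (simp add: prism_def cocycle)
qed

lemma eta_vanishes_unsplit: "unsplit m univ_half m t \<Longrightarrow> \<eta> t = 0"
proof -
  assume "unsplit m univ_half m t"
  then obtain i where i: "i \<in> {1..m}" "(\<forall>j\<le>m. i \<in> t j) \<or> (\<forall>j\<le>m. i \<notin> t j)"
    by (auto simp: unsplit_def)
  have "unsplit (Suc m) univ_half (Suc m) (prism_simplex (Suc m) j t)" if "j \<le> m" for j
    unfolding unsplit_def using i that by (intro bexI[of _ i]) (auto simp: prism_simplex_def)
  then show "\<eta> t = 0"
    by (simp add: prism_def vanishes_unsplit)
qed

lemma eta_vanishes_top:
  assumes "\<forall>j\<le>m. Suc m \<in> t j"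
  shows "\<eta> t = 0"
proof -
  have "\<omega> (prism_simplex (Suc m) j t) = 0" for j
    by (rule vanishes_unsplit)
       (use assms in \<open>auto simp: unsplit_def prism_simplex_def intro!: bexI[of _ "Suc m"]\<close>)
  then show ?thesis
    by (simp add: prism_def)
qed

lemma determined_eta: "determined_upto m \<eta>"
  unfolding determined_upto_def
proof (intro allI impI)
  fix t t' :: "nat \<Rightarrow> nat set"
  assume "\<forall>j\<le>m. t j = t' j"
  then have "\<forall>l\<le>Suc m. prism_simplex (Suc m) j t l = prism_simplex (Suc m) j t' l"
    if "j \<le> m" for j
    using that by (auto simp: prism_simplex_def)
  then have "\<omega> (prism_simplex (Suc m) j t) = \<omega> (prism_simplex (Suc m) j t')" if "j \<le> m" for j
    using determined that unfolding determined_upto_def by blast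
  then show "\<eta> t = \<eta> t'"
    by (simp add: prism_def)
qed

definition \<beta> where "\<beta> t = \<eta> (\<lambda>l. t l - {Suc m})"

lemma beta_vanishes_unsplit: "unsplit m univ_half m t \<Longrightarrow> \<beta> t = 0"
  unfolding \<beta>_def by (rule eta_vanishes_unsplit) (auto simp: unsplit_def)

lemma coboundary_beta: "coboundary m \<beta> t = 0"
proof -
  have "coboundary m \<beta> t = coboundary m \<eta> (\<lambda>l. t l - {Suc m})"
    by (simp add: coboundary_def \<beta>_def face_Diff)
  also have "\<dots> = \<omega> (\<lambda>l. t l - {Suc m})"
    by (rule coboundary_eta)
  also have "\<dots> = 0"
    by (rule vanishes_unsplit) (auto simp: unsplit_def)
  finally show ?thesis .
qed

lemma determined_beta: "determined_upto m \<beta>"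
  using determined_eta unfolding determined_upto_def \<beta>_def by simp

lemma eta_eq_beta: "\<forall>j\<le>m. Suc m \<notin> t j \<Longrightarrow> \<eta> t = \<beta> t"
  using determined_eta unfolding determined_upto_def \<beta>_def by simp

lemma relative_primitive_from_correction:
  assumes "\<And>t. coboundary m C t = 0"
    and "\<And>t. unsplit m univ_half m t \<Longrightarrow> C t = 0"
    and "\<And>t. \<forall>j\<le>m. Suc m \<in> t j \<Longrightarrow> C t = 0"
    and "\<And>t. \<forall>j\<le>m. Suc m \<notin> t j \<Longrightarrow> C t = \<beta> t"
  shows "relative_coboundary m \<omega>"
  unfolding relative_coboundary_def
proof (intro exI[of _ "\<lambda>t. \<eta> t - C t"] conjI allI impI)
  fix t
  show "coboundary m (\<lambda>t. \<eta> t - C t) t = \<omega> t"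
    by (simp add: coboundary_diff coboundary_eta assms(1))
next
  fix t
  assume "unsplit (Suc m) univ_half m t"
  then obtain i where "i \<in> {1..Suc m}" "(\<forall>j\<le>m. i \<in> t j) \<or> (\<forall>j\<le>m. i \<notin> t j)"
    unfolding unsplit_def by auto
  then consider "unsplit m univ_half m t" | "\<forall>j\<le>m. Suc m \<in> t j" | "\<forall>j\<le>m. Suc m \<notin> t j"
  proof (cases "i = Suc m")
    case False
    with \<open>i \<in> {1..Suc m}\<close> have "i \<in> {1..m}"
      by auto
    then have "unsplit m univ_half m t"
      using \<open>(\<forall>j\<le>m. i \<in> t j) \<or> (\<forall>j\<le>m. i \<notin> t j)\<close> unfolding unsplit_def by auto
    then show ?thesis
      by (rule that(1))
  qed (use that in auto)
  then show "\<eta> t - C t = 0"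
    by cases (simp_all add: assms(2-4) eta_vanishes_unsplit eta_vanishes_top eta_eq_beta)
qed

lemma relative_primitive_from_lower_primitive:
  assumes "m = Suc m'"
    and \<gamma>_vanishes: "\<And>t. unsplit m univ_half m' t \<Longrightarrow> \<gamma> t = 0"
    and \<gamma>_primitive: "\<And>t. coboundary m' \<gamma> t = \<beta> t"
  shows "relative_coboundary m \<omega>"
proof -
  define \<Gamma> where "\<Gamma> t = (if \<forall>j\<le>m'. Suc m \<notin> t j then \<gamma> t else 0)" for t
  show ?thesis
  proof (rule relative_primitive_from_correction)
    fix t
    show "coboundary m (coboundary m' \<Gamma>) t = 0"
      unfolding \<open>m = Suc m'\<close> by (rule coboundary_coboundary)
    show "coboundary m' \<Gamma> t = 0" if "unsplit m univ_half m t"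
    proof -
      have "\<Gamma> (face i t) = 0" for i
        using \<gamma>_vanishes[OF unsplit_face] that \<open>m = Suc m'\<close> by (simp add: \<Gamma>_def)
      then show ?thesis
        by (simp add: coboundary_def)
    qed
    show "coboundary m' \<Gamma> t = 0" if "\<forall>j\<le>m. Suc m \<in> t j"
    proof -
      have "Suc m \<in> face i t 0" for i
        using that \<open>m = Suc m'\<close> by (simp add: face_def)
      then have "\<Gamma> (face i t) = 0" for i
        by (auto simp: \<Gamma>_def)
      then show ?thesis
        by (simp add: coboundary_def)
    qed
    show "coboundary m' \<Gamma> t = \<beta> t" if "\<forall>j\<le>m. Suc m \<notin> t j"
    proof -
      have "\<Gamma> (face i t) = \<gamma> (face i t)" for i
        using that \<open>m = Suc m'\<close> by (auto simp: \<Gamma>_def face_def)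
      then show ?thesis
        using \<gamma>_primitive[of t] by (simp add: coboundary_def)
    qed
  qed
qed

end

locale flag_cocycle = relative_cocycle +
  assumes vanishes_flag: "\<And>t. complete_flag (Suc m) t \<Longrightarrow> \<omega> t = 0"
begin

lemma beta_vanishes_flag: "complete_flag m t \<Longrightarrow> \<beta> t = 0"
  by (simp add: \<beta>_def prism_def vanishes_flag complete_flag_prism_simplex complete_flag_diff_Suc)

end

lemma flag_cocycle_relative_coboundary:
  assumes "flag_cocycle m \<omega>"
  shows "relative_coboundary m \<omega>"
  using assms
proof (induction m arbitrary: \<omega>)
  case 0
  interpret flag_cocycle 0 \<omega> by fact
  have "\<beta> t = 0" for t
    by (rule cocycle_vanishing_on_flags_0) (simp_all add: coboundary_beta beta_vanishes_flag)
  then show ?case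
    by (intro relative_primitive_from_correction[of "\<lambda>_. 0"]) (simp_all add: coboundary_def)
next
  case (Suc m)
  interpret flag_cocycle "Suc m" \<omega> by fact
  have "flag_cocycle m \<beta>"
    by unfold_locales
       (simp_all add: determined_beta beta_vanishes_unsplit coboundary_beta beta_vanishes_flag)
  then obtain \<gamma> where "\<And>t. unsplit (Suc m) univ_half m t \<Longrightarrow> \<gamma> t = 0"
    "\<And>t. coboundary m \<gamma> t = \<beta> t"
    using Suc.IH unfolding relative_coboundary_def by blast
  then show ?case
    by (rule relative_primitive_from_lower_primitive[OF refl])
qed

section \<open>Wedge products\<close>

lemma permutes_atMost_le: "p permutes {..k} \<Longrightarrow> j \<le> k \<Longrightarrow> p j \<le> k"
  using permutes_in_image[of p "{..k}" j] by simp

lemma permutes_inv_atMost_le: "p permutes {..k} \<Longrightarrow> j \<le> k \<Longrightarrow> Hilbert_Choice.inv p j \<le> k"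
  using permutes_atMost_le[OF permutes_inv] by blast

lemma wedge_cong:
  assumes "\<And>i j. i \<le> k \<Longrightarrow> j \<le> k \<Longrightarrow> f i (x j) = g i (y j)"
  shows "wedge k f x = wedge k g y"
  unfolding wedge_def
  by (intro sum.cong refl arg_cong2[where f = "(*)"] prod.cong)
     (auto simp: assms permutes_atMost_le)

lemma determined_wedge: "determined_upto k (wedge k f)"
  unfolding determined_upto_def by (auto intro: wedge_cong)

lemma wedge_eq_det: "wedge k f t = det (mat (Suc k) (Suc k) (\<lambda>(j, i). f i (t j)))"
proof -
  have "{0..<Suc k} = {..k}"
    by auto
  then show ?thesis
    unfolding wedge_def det_def'[OF mat_carrier]
    by (intro sum.cong refl arg_cong2[where f = "(*)"] prod.cong) (auto simp: permutes_atMost_le)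
qed

lemma wedge_eq_0_if_equal_columns:
  assumes "i \<noteq> i'" "i \<le> k" "i' \<le> k" "\<forall>j\<le>k. f i (t j) = f i' (t j)"
  shows "wedge k f t = 0"
  unfolding wedge_eq_det
  by (rule det_identical_columns[OF mat_carrier, of i i']) (use assms in \<open>auto intro!: eq_vecI\<close>)

lemma wedge_eq_0_if_zero_column:
  assumes "i \<le> k" "\<forall>j\<le>k. f i (t j) = 0"
  shows "wedge k f t = 0"
  unfolding wedge_def
proof (intro sum.neutral ballI)
  fix p assume "p \<in> {p. p permutes {..k}}"
  then have "Hilbert_Choice.inv p i \<le> k" "p (Hilbert_Choice.inv p i) = i"
    using assms(1) by (auto simp: permutes_inv_atMost_le permutes_inverses(1))
  then have "(\<Prod>j\<le>k. f (p j) (t j)) = 0"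
    using assms(2) by (intro prod_zero) (auto intro!: bexI[of _ "Hilbert_Choice.inv p i"])
  then show "of_int (sign p) * (\<Prod>j\<le>k. f (p j) (t j)) = 0"
    by simp
qed

lemma coboundary_wedge: "coboundary k (wedge k f) t = wedge (Suc k) (case_nat (\<lambda>_. 1) f) t"
proof -
  define M where "M = mat (Suc (Suc k)) (Suc (Suc k)) (\<lambda>(j, i). case_nat (\<lambda>_. 1) f i (t j))"
  have M: "M \<in> carrier_mat (Suc (Suc k)) (Suc (Suc k))"
    by (simp add: M_def)
  have entry: "M $$ (j, 0) = 1" if "j < Suc (Suc k)" for j
    using that by (simp add: M_def)
  have minor: "mat_delete M j 0 = mat (Suc k) (Suc k) (\<lambda>(j', i). f i (face j t j'))"
    if "j < Suc (Suc k)" for j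
    using that by (intro eq_matI) (auto simp: mat_delete_def M_def face_def)
  have "wedge (Suc k) (case_nat (\<lambda>_. 1) f) t = det M"
    unfolding wedge_eq_det M_def ..
  also have "\<dots> = (\<Sum>j<Suc (Suc k). M $$ (j, 0) * cofactor M j 0)"
    by (rule laplace_expansion_column[OF M]) simp
  also have "\<dots> = (\<Sum>j<Suc (Suc k). (-1)^j * wedge k f (face j t))"
    by (intro sum.cong refl) (simp add: entry cofactor_def minor wedge_eq_det)
  finally show ?thesis
    by (simp add: coboundary_def lessThan_Suc_atMost)
qed

lemma prod_permutes_column_sum:
  fixes p :: "nat \<Rightarrow> nat" and g :: "nat \<Rightarrow> 'a \<Rightarrow> 'b::comm_semiring_1"
  assumes p: "p permutes {..k}" and g: "\<And>v. g 0 v = (\<Sum>i\<in>S. g i v)"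
  shows "(\<Prod>j\<le>k. g (p j) (t j)) = (\<Sum>i\<in>S. \<Prod>j\<le>k. (g(0 := g i)) (p j) (t j))"
proof -
  define j0 where "j0 = Hilbert_Choice.inv p 0"
  have j0: "j0 \<in> {..k}" "p j0 = 0"
    using p by (auto simp: j0_def permutes_inv_atMost_le permutes_inverses(1))
  have nonzero: "p j \<noteq> 0" if "j \<noteq> j0" for j
    using that p unfolding j0_def by (metis permutes_inverses(2))
  have "(g(0 := h)) (p j) (t j) = g (p j) (t j)" if "j \<noteq> j0" for j h
    using nonzero[OF that] by simp
  then have others:
    "(\<Prod>j\<in>{..k} - {j0}. (g(0 := h)) (p j) (t j)) = (\<Prod>j\<in>{..k} - {j0}. g (p j) (t j))" for h
    by (intro prod.cong refl) auto
  have "(\<Prod>j\<le>k. g (p j) (t j)) = g 0 (t j0) * (\<Prod>j\<in>{..k} - {j0}. g (p j) (t j))"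
    using j0 by (simp add: prod.remove)
  also have "\<dots> = (\<Sum>i\<in>S. (g(0 := g i)) (p j0) (t j0) *
      (\<Prod>j\<in>{..k} - {j0}. (g(0 := g i)) (p j) (t j)))"
    by (simp only: g sum_distrib_right others j0(2) fun_upd_same)
  also have "\<dots> = (\<Sum>i\<in>S. \<Prod>j\<le>k. (g(0 := g i)) (p j) (t j))"
    by (simp only: prod.remove[OF finite_atMost j0(1)])
  finally show ?thesis .
qed

lemma wedge_eq_0_if_column_sum:
  assumes S: "finite S" "0 \<notin> S" "S \<subseteq> {..k}" and g: "\<And>v. g 0 v = (\<Sum>i\<in>S. g i v)"
  shows "wedge k g t = 0"
proof -
  have "wedge k g t = (\<Sum>p\<in>{p. p permutes {..k}}. \<Sum>i\<in>S.
      of_int (sign p) * (\<Prod>j\<le>k. (g(0 := g i)) (p j) (t j)))"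
    unfolding wedge_def
  proof (rule sum.cong[OF refl])
    fix p
    assume "p \<in> {p. p permutes {..k}}"
    then have "(\<Prod>j\<le>k. g (p j) (t j)) = (\<Sum>i\<in>S. \<Prod>j\<le>k. (g(0 := g i)) (p j) (t j))"
      using prod_permutes_column_sum g by blast
    then show "of_int (sign p) * (\<Prod>j\<le>k. g (p j) (t j))
        = (\<Sum>i\<in>S. of_int (sign p) * (\<Prod>j\<le>k. (g(0 := g i)) (p j) (t j)))"
      by (simp only: sum_distrib_left)
  qed
  also have "\<dots> = (\<Sum>i\<in>S. wedge k (g(0 := g i)) t)"
    unfolding wedge_def by (rule sum.swap)
  also have "\<dots> = 0"
  proof (intro sum.neutral ballI)
    fix i
    assume "i \<in> S"
    with S have "i \<noteq> 0" "i \<le> k"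
      by (metis, auto)
    then show "wedge k (g(0 := g i)) t = 0"
      by (intro wedge_eq_0_if_equal_columns[of 0 i]) auto
  qed
  finally show ?thesis .
qed

lemma coboundary_wedge_eq_0:
  assumes "S \<subseteq> {..k}" and "\<And>v. (\<Sum>i\<in>S. f i v) = 1"
  shows "coboundary k (wedge k f) t = 0"
proof -
  have "finite S"
    using assms(1) finite_subset by blast
  have "(\<Sum>i\<in>Suc ` S. case_nat (\<lambda>_. 1) f i v) = 1" for v
    using assms(2) by (simp add: sum.reindex)
  then show ?thesis
    unfolding coboundary_wedge using assms(1) \<open>finite S\<close>
    by (intro wedge_eq_0_if_column_sum[of "Suc ` S"]) auto
qed

lemma wedge_eq_single_term:
  assumes "p0 permutes {..k}"
    and "\<And>p. p permutes {..k} \<Longrightarrow> p \<noteq> p0 \<Longrightarrow> (\<Prod>j\<le>k. f (p j) (x j)) = 0"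
  shows "wedge k f x = of_int (sign p0) * (\<Prod>j\<le>k. f (p0 j) (x j))"
proof -
  have "wedge k f x = of_int (sign p0) * (\<Prod>j\<le>k. f (p0 j) (x j))
      + (\<Sum>p\<in>{p. p permutes {..k}} - {p0}. of_int (sign p) * (\<Prod>j\<le>k. f (p j) (x j)))"
    unfolding wedge_def by (rule sum.remove) (simp_all add: finite_permutations assms(1))
  also have "(\<Sum>p\<in>{p. p permutes {..k}} - {p0}. of_int (sign p) * (\<Prod>j\<le>k. f (p j) (x j))) = 0"
    by (intro sum.neutral ballI) (simp add: assms(2))
  finally show ?thesis
    by simp
qed

lemma coboundary_lincomb:
  "coboundary k (\<lambda>t. \<Sum>a\<in>A. c a * f a t) t = (\<Sum>a\<in>A. c a * coboundary k (f a) t)"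
  unfolding coboundary_def sum_distrib_left by (subst sum.swap) (simp add: mult_ac)

definition lhs_cochain :: "nat \<Rightarrow> (nat \<Rightarrow> 'a set) \<Rightarrow> (nat \<Rightarrow> 'a) \<Rightarrow> complex" where
  "lhs_cochain n X = wedge n (\<lambda>i. if i = 0 then (\<lambda>_. 1) else ind (X i))"

definition rhs_cochain :: "nat \<Rightarrow> (nat \<Rightarrow> 'a set) \<Rightarrow> (nat \<Rightarrow> 'a) \<Rightarrow> complex" where
  "rhs_cochain n X = (\<lambda>x. (-1)^n *
     (\<Sum>\<sigma>\<in>{\<sigma>. \<sigma> permutes {1..n}}. of_int (sign \<sigma>) * wedge n (A_fun n X \<sigma>) x))"

lemma ind_Compl: "ind (- Y) v = 1 - ind Y v"
  by (simp add: ind_def indicator_def)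

lemma sum_A_fun: "(\<Sum>i\<le>n. A_fun n X \<sigma> i v) = 1"
proof -
  define B where "B i = (\<Prod>j\<in>{Suc i..n}. ind (X (\<sigma> j)) v)" for i
  have "A_fun n X \<sigma> (Suc i) v = B (Suc i) - B i" if "i < n" for i
    using that by (simp add: A_fun_def B_def ind_Compl prod.atLeast_Suc_atMost algebra_simps)
  then have "(\<Sum>i\<le>n. A_fun n X \<sigma> i v) = B 0 + (\<Sum>i<n. B (Suc i) - B i)"
    by (simp add: sum.atMost_shift A_fun_def B_def)
  also have "\<dots> = B n"
    by (simp add: sum_lessThan_telescope)
  also have "\<dots> = 1"
    by (simp add: B_def)
  finally show ?thesis .
qed

lemma coboundary_lhs_cochain: "coboundary n (lhs_cochain n X) t = 0"
  unfolding lhs_cochain_def by (rule coboundary_wedge_eq_0[of "{0}"]) auto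

lemma coboundary_rhs_cochain: "coboundary n (rhs_cochain n X) t = 0"
proof -
  have "rhs_cochain n X = (\<lambda>x. \<Sum>\<sigma>\<in>{\<sigma>. \<sigma> permutes {1..n}}.
      ((-1)^n * of_int (sign \<sigma>)) * wedge n (A_fun n X \<sigma>) x)"
    by (simp add: rhs_cochain_def sum_distrib_left mult.assoc)
  then show ?thesis
    by (simp add: coboundary_lincomb coboundary_wedge_eq_0[OF order.refl sum_A_fun])
qed

lemma determined_lhs_cochain: "determined_upto n (lhs_cochain n X)"
  unfolding lhs_cochain_def by (rule determined_wedge)

lemma determined_rhs_cochain: "determined_upto n (rhs_cochain n X)"
  using determined_wedge unfolding determined_upto_def rhs_cochain_def
  by (metis (no_types, lifting) sum.cong)

lemma lhs_cochain_unsplit: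
  assumes "unsplit n X n x"
  shows "lhs_cochain n X x = 0"
proof -
  obtain i where "i \<in> {1..n}" and "(\<forall>j\<le>n. x j \<in> X i) \<or> (\<forall>j\<le>n. x j \<notin> X i)"
    using assms unfolding unsplit_def by blast
  then show ?thesis
    unfolding lhs_cochain_def
    by (elim disjE)
       (auto simp: ind_def intro: wedge_eq_0_if_equal_columns[of 0 i] wedge_eq_0_if_zero_column[of i])
qed

lemma rhs_cochain_unsplit:
  assumes "unsplit n X n x"
  shows "rhs_cochain n X x = 0"
proof -
  obtain i where i: "i \<in> {1..n}" and all_or_none: "(\<forall>j\<le>n. x j \<in> X i) \<or> (\<forall>j\<le>n. x j \<notin> X i)"
    using assms unfolding unsplit_def by blast
  have "wedge n (A_fun n X \<sigma>) x = 0" if \<sigma>: "\<sigma> permutes {1..n}" for \<sigma>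
  proof -
    define p where "p = Hilbert_Choice.inv \<sigma> i"
    have p: "p \<in> {1..n}" "\<sigma> p = i"
      using i \<sigma> unfolding p_def by (metis permutes_in_image permutes_inv, metis permutes_inverses(1))
    show ?thesis
    proof (cases "\<forall>j\<le>n. x j \<in> X i")
      case True
      then show ?thesis
        using p by (intro wedge_eq_0_if_zero_column[of p]) (auto simp: A_fun_def ind_def)
    next
      case False
      then have "\<forall>j\<le>n. x j \<notin> X i"
        using all_or_none by blast
      then have "A_fun n X \<sigma> 0 (x j) = 0" if "j \<le> n" for j
        using p that by (auto simp: A_fun_def ind_def intro!: prod_zero bexI[of _ p])
      then show ?thesis
        by (intro wedge_eq_0_if_zero_column[of 0]) auto
    qed
  qed
  then show ?thesis
    by (simp add: rhs_cochain_def)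
qed

section \<open>The two cochains on complete flags\<close>

definition flag_perm :: "nat \<Rightarrow> (nat \<Rightarrow> nat set) \<Rightarrow> nat \<Rightarrow> nat" where
  "flag_perm n t k = (if k \<in> {1..n} then the_elem (t (k - 1) - t k) else k)"

lemma flag_perm_step:
  assumes "complete_flag n t" "k \<in> {1..n}"
  shows "flag_perm n t k \<in> {1..n}" "flag_perm n t k \<notin> t k"
    "t (k - 1) = insert (flag_perm n t k) (t k)"
proof -
  have "k - 1 < n" "Suc (k - 1) = k"
    using assms(2) by auto
  then obtain a where "a \<in> {1..n}" "a \<notin> t k" "t (k - 1) = insert a (t k)"
    using assms(1) unfolding complete_flag_def by metis
  moreover from this have "flag_perm n t k = a"
    using assms(2) by (simp add: flag_perm_def insert_Diff_if)
  ultimately show "flag_perm n t k \<in> {1..n}" "flag_perm n t k \<notin> t k"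
    "t (k - 1) = insert (flag_perm n t k) (t k)"
    by simp_all
qed

lemma complete_flag_eq_image:
  "complete_flag n t \<Longrightarrow> j \<le> n \<Longrightarrow> t j = flag_perm n t ` {Suc j..n}"
proof (induction "n - j" arbitrary: j)
  case 0
  then show ?case by (simp add: complete_flag_def)
next
  case (Suc d)
  then have "t (Suc j) = flag_perm n t ` {Suc (Suc j)..n}" "Suc j \<in> {1..n}"
    by simp_all
  moreover have "{Suc j..n} = insert (Suc j) {Suc (Suc j)..n}"
    using Suc.hyps(2) by auto
  ultimately show ?case
    using flag_perm_step(3)[OF Suc.prems(1), of "Suc j"] by simp
qed

lemma flag_perm_permutes:
  assumes "complete_flag n t"
  shows "flag_perm n t permutes {1..n}"
proof (rule bij_imp_permutes)
  have "inj_on (flag_perm n t) {1..n}"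
  proof (rule linorder_inj_onI')
    fix k k' assume k: "k \<in> {1..n}" and "k' \<in> {1..n}" "k < k'"
    then have "flag_perm n t k' \<in> t k"
      using complete_flag_eq_image[OF assms, of k] by auto
    moreover have "flag_perm n t k \<notin> t k"
      using flag_perm_step(2)[OF assms k] .
    ultimately show "flag_perm n t k \<noteq> flag_perm n t k'"
      by auto
  qed
  moreover have "flag_perm n t ` {1..n} \<subseteq> {1..n}"
    using flag_perm_step(1)[OF assms] by auto
  ultimately show "bij_betw (flag_perm n t) {1..n} {1..n}"
    by (simp add: bij_betw_def endo_inj_surj)
  show "flag_perm n t k = k" if "k \<notin> {1..n}" for k
    using that unfolding flag_perm_def by (rule if_not_P)
qed

definition cycle_shift :: "nat \<Rightarrow> nat \<Rightarrow> nat" where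
  "cycle_shift n j = (if j < n then Suc j else if j = n then 0 else j)"

lemma cycle_shift_0: "cycle_shift 0 = id"
  by (auto simp: cycle_shift_def fun_eq_iff id_def)

lemma cycle_shift_Suc: "cycle_shift (Suc n) = cycle_shift n \<circ> Transposition.transpose n (Suc n)"
proof
  fix x
  consider "x < n" | "x = n" | "x = Suc n" | "Suc n < x"
    by linarith
  then show "cycle_shift (Suc n) x = (cycle_shift n \<circ> Transposition.transpose n (Suc n)) x"
    by cases (auto simp: cycle_shift_def transpose_apply_other)
qed

lemma cycle_shift_permutes: "cycle_shift n permutes {..n}"
proof (induction n)
  case 0
  then show ?case unfolding cycle_shift_0 by (rule permutes_id)
next
  case (Suc n)
  then have "cycle_shift n permutes {..Suc n}"
    by (rule permutes_subset) auto
  then show ?case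
    unfolding cycle_shift_Suc by (rule permutes_compose[rotated]) (auto intro: permutes_swap_id)
qed

lemma sign_cycle_shift: "sign (cycle_shift n) = (-1)^n"
proof (induction n)
  case 0
  then show ?case by (simp add: cycle_shift_0 sign_id)
next
  case (Suc n)
  have "permutation (cycle_shift n)"
    using cycle_shift_permutes permutation_permutes by blast
  then show ?case
    unfolding cycle_shift_Suc sign_compose[OF \<open>permutation (cycle_shift n)\<close> permutation_swap_id]
    by (simp add: sign_swap_id Suc)
qed

lemma permutes_eqI:
  assumes "p permutes S" "q permutes S" "\<And>x. x \<in> S \<Longrightarrow> p x = q x"
  shows "p = q"
proof
  fix x
  show "p x = q x"
    by (cases "x \<in> S") (simp_all add: assms(3) permutes_not_in[OF assms(1)] permutes_not_in[OF assms(2)])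
qed

lemma permutes_increasing_eq_id:
  fixes \<rho> :: "nat \<Rightarrow> nat"
  assumes "\<rho> permutes {..n}" and "\<And>j. j \<le> n \<Longrightarrow> j \<le> \<rho> j"
  shows "\<rho> = id"
proof (rule permutes_eqI[OF assms(1) permutes_id], rule ccontr)
  fix j assume j: "j \<in> {..n}" "\<rho> j \<noteq> id j"
  with assms(2) have "(\<Sum>i\<le>n. i) < (\<Sum>i\<le>n. \<rho> i)"
    by (intro sum_strict_mono_ex1) (auto intro!: bexI[of _ j] le_neq_implies_less)
  moreover have "(\<Sum>i\<le>n. \<rho> i) = (\<Sum>i\<le>n. i)"
    using sum.permute[OF assms(1), of id] by (simp add: comp_def)
  ultimately show False
    by simp
qed

text \<open>On a complete flag, the only nonvanishing term of the left wedge product is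
  \<open>flag_perm n t \<circ> cycle_shift n\<close>: vertex \<open>n\<close> must take the constant \<open>1\<close>, and vertex \<open>j < n\<close>
  the element removed at step \<open>j + 1\<close> of the flag.\<close>

lemma lhs_term_unique:
  assumes t: "complete_flag n t" and \<pi>: "\<pi> permutes {..n}"
    and nonzero: "\<And>j. j \<le> n \<Longrightarrow> \<pi> j = 0 \<or> \<pi> j \<in> t j"
  shows "\<pi> = flag_perm n t \<circ> cycle_shift n"
proof -
  define g where "g = flag_perm n t \<circ> cycle_shift n"
  have g: "g permutes {..n}"
    unfolding g_def using flag_perm_permutes[OF t] cycle_shift_permutes
    by (intro permutes_compose) (auto intro: permutes_subset)
  have ex: "\<exists>m. j \<le> m \<and> \<pi> j = g m" if j: "j \<le> n" for j
  proof (cases "\<pi> j = 0")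
    case True
    then show ?thesis
      using j permutes_not_in[OF flag_perm_permutes[OF t], of 0]
      by (intro exI[of _ n]) (simp add: g_def cycle_shift_def)
  next
    case False
    then obtain m where "m \<in> {Suc j..n}" "\<pi> j = flag_perm n t m"
      using nonzero[OF j] complete_flag_eq_image[OF t j] by auto
    then show ?thesis
      by (intro exI[of _ "m - 1"]) (auto simp: g_def cycle_shift_def)
  qed
  have "j \<le> (Hilbert_Choice.inv g \<circ> \<pi>) j" if j: "j \<le> n" for j
  proof -
    obtain m where "j \<le> m" "\<pi> j = g m"
      using ex[OF j] by blast
    then show ?thesis
      using permutes_inverses(2)[OF g, of m] by simp
  qed
  then have id: "Hilbert_Choice.inv g \<circ> \<pi> = id"
    by (rule permutes_increasing_eq_id[OF permutes_compose[OF \<pi> permutes_inv[OF g]]])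
  have "\<pi> = (g \<circ> Hilbert_Choice.inv g) \<circ> \<pi>"
    by (simp add: permutes_inv_o(1)[OF g])
  also have "\<dots> = g"
    by (simp only: comp_assoc id comp_id)
  finally show ?thesis
    by (simp add: g_def)
qed

lemma lhs_cochain_complete_flag:
  assumes t: "complete_flag n t"
  shows "lhs_cochain n univ_half t = (-1)^n * of_int (sign (flag_perm n t))"
proof -
  define b where "b = flag_perm n t"
  define f :: "nat \<Rightarrow> nat set \<Rightarrow> complex" where "f i = (if i = 0 then (\<lambda>_. 1) else ind (univ_half i))" for i
  have f: "f i v = (if i = 0 \<or> i \<in> v then 1 else 0)" for i v
    by (simp add: f_def ind_def indicator_def)
  have b: "b permutes {1..n}"
    unfolding b_def by (rule flag_perm_permutes[OF t])
  have g: "b \<circ> cycle_shift n permutes {..n}"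
    using b cycle_shift_permutes by (intro permutes_compose) (auto intro: permutes_subset)
  have perm: "permutation b" "permutation (cycle_shift n)"
    using b cycle_shift_permutes finite_atLeastAtMost finite_atMost permutation_permutes by blast+
  have "(\<Prod>j\<le>n. f ((b \<circ> cycle_shift n) j) (t j)) = 1"
    using complete_flag_eq_image[OF t] permutes_not_in[OF b, of 0]
    by (intro prod.neutral) (auto simp: f b_def cycle_shift_def)
  moreover have "(\<Prod>j\<le>n. f (\<pi> j) (t j)) = 0" if "\<pi> permutes {..n}" "\<pi> \<noteq> b \<circ> cycle_shift n" for \<pi>
    using lhs_term_unique[OF t that(1)] that(2) by (auto simp: f b_def prod_zero_iff split: if_splits)
  ultimately have "lhs_cochain n univ_half t = of_int (sign (b \<circ> cycle_shift n))"
    unfolding lhs_cochain_def f_def[symmetric] by (simp add: wedge_eq_single_term[OF g])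
  also have "sign (b \<circ> cycle_shift n) = sign b * (-1)^n"
    by (simp add: sign_compose[OF perm] sign_cycle_shift)
  finally show ?thesis
    by (simp add: b_def)
qed

lemma A_fun_univ_half:
  "A_fun n univ_half \<sigma> k v = (if (k \<noteq> 0 \<longrightarrow> \<sigma> k \<notin> v) \<and> \<sigma> ` {Suc k..n} \<subseteq> v then 1 else 0)"
  by (auto simp: A_fun_def ind_def indicator_def prod_zero_iff intro!: prod.neutral)

lemma rhs_term_unique:
  assumes t: "complete_flag n t" and \<sigma>: "\<sigma> permutes {1..n}" and \<pi>: "\<pi> permutes {..n}"
    and nonzero: "\<And>j. j \<le> n \<Longrightarrow> A_fun n univ_half \<sigma> (\<pi> j) (t j) \<noteq> 0"
  shows "\<pi> = id" "\<sigma> = flag_perm n t"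
proof -
  define b where "b = flag_perm n t"
  have b: "b permutes {1..n}"
    unfolding b_def by (rule flag_perm_permutes[OF t])
  have t_eq: "t j = b ` {Suc j..n}" if "j \<le> n" for j
    unfolding b_def using complete_flag_eq_image[OF t that] .
  have card_image: "card (p ` {Suc j..n}) = n - j" if "p permutes {1..n}" for p j
    using that by (simp add: card_image permutes_inj_on)
  have sub: "\<sigma> ` {Suc (\<pi> j)..n} \<subseteq> b ` {Suc j..n}" if "j \<le> n" for j
    using nonzero[OF that] t_eq[OF that] by (simp add: A_fun_univ_half split: if_splits)
  have "j \<le> \<pi> j" if "j \<le> n" for j
  proof -
    have "n - \<pi> j \<le> n - j"
      using card_mono[OF _ sub[OF that]] card_image[OF \<sigma>] card_image[OF b] by simp
    then show ?thesis
      using that permutes_atMost_le[OF \<pi> that] by linarith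
  qed
  then show \<pi>_id: "\<pi> = id"
    by (rule permutes_increasing_eq_id[OF \<pi>])
  have image_eq: "\<sigma> ` {Suc j..n} = b ` {Suc j..n}" if "j \<le> n" for j
    using sub[OF that] card_image[OF \<sigma>] card_image[OF b] \<pi>_id
    by (intro card_subset_eq) auto
  have "\<sigma> k = b k" if k: "k \<in> {1..n}" for k
  proof -
    have "k - 1 \<le> n" "Suc (k - 1) = k"
      using k by auto
    then have "\<sigma> ` {k..n} = b ` {k..n}"
      using image_eq[of "k - 1"] by simp
    moreover have "\<sigma> k \<in> \<sigma> ` {k..n}"
      using k by auto
    ultimately have "\<sigma> k \<in> b ` {k..n}"
      by simp
    also have "{k..n} = insert k {Suc k..n}"
      using k by auto
    finally show ?thesis
      using nonzero[of k] k t_eq[of k] \<pi>_id by (auto simp: A_fun_univ_half split: if_splits)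
  qed
  then show "\<sigma> = flag_perm n t"
    unfolding b_def[symmetric] by (rule permutes_eqI[OF \<sigma> b])
qed

lemma rhs_cochain_complete_flag:
  assumes t: "complete_flag n t"
  shows "rhs_cochain n univ_half t = (-1)^n * of_int (sign (flag_perm n t))"
proof -
  have "wedge n (A_fun n univ_half \<sigma>) t = (if \<sigma> = flag_perm n t then 1 else 0)"
    if \<sigma>: "\<sigma> permutes {1..n}" for \<sigma>
  proof -
    have "wedge n (A_fun n univ_half \<sigma>) t = (\<Prod>j\<le>n. A_fun n univ_half \<sigma> j (t j))"
      using rhs_term_unique(1)[OF t \<sigma>]
      by (subst wedge_eq_single_term[OF permutes_id]) (auto simp: sign_id prod_zero_iff)
    also have "\<dots> = (if \<sigma> = flag_perm n t then 1 else 0)"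
    proof (cases "\<sigma> = flag_perm n t")
      case True
      have "A_fun n univ_half \<sigma> j (t j) = 1" if "j \<le> n" for j
        using flag_perm_step(2)[OF t, of j] complete_flag_eq_image[OF t that] that True
        by (auto simp: A_fun_univ_half)
      with True show ?thesis
        by simp
    next
      case False
      then show ?thesis
        using rhs_term_unique(2)[OF t \<sigma> permutes_id] by (auto simp: prod_zero_iff)
    qed
    finally show ?thesis .
  qed
  then have "(\<Sum>\<sigma>\<in>{\<sigma>. \<sigma> permutes {1..n}}. of_int (sign \<sigma>) * wedge n (A_fun n univ_half \<sigma>) t)
      = (\<Sum>\<sigma>\<in>{\<sigma>. \<sigma> permutes {1..n}}. if \<sigma> = flag_perm n t then of_int (sign \<sigma>) else 0)"
    by (intro sum.cong) simp_all
  also have "\<dots> = of_int (sign (flag_perm n t))"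
    using flag_perm_permutes[OF t] by (simp add: finite_permutations)
  finally show ?thesis
    by (simp add: rhs_cochain_def)
qed

section \<open>Pulling back along the pattern map\<close>

definition pattern :: "nat \<Rightarrow> (nat \<Rightarrow> 'a set) \<Rightarrow> 'a \<Rightarrow> nat set" where
  "pattern n X y = {i \<in> {1..n}. y \<in> X i}"

definition tuple_pattern :: "nat \<Rightarrow> (nat \<Rightarrow> 'a set) \<Rightarrow> nat \<Rightarrow> (nat \<Rightarrow> 'a) \<Rightarrow> nat \<Rightarrow> nat set" where
  "tuple_pattern n X k x = (\<lambda>j. if j \<le> k then pattern n X (x j) else {})"

lemma ind_univ_half_pattern: "i \<in> {1..n} \<Longrightarrow> ind (univ_half i) (pattern n X y) = ind (X i) y"
  by (simp add: ind_def pattern_def indicator_def)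

lemma lhs_cochain_pattern: "lhs_cochain n X = (\<lambda>x. lhs_cochain n univ_half (tuple_pattern n X n x))"
  unfolding lhs_cochain_def
  by (intro ext wedge_cong) (simp add: tuple_pattern_def ind_univ_half_pattern)

lemma rhs_cochain_pattern: "rhs_cochain n X = (\<lambda>x. rhs_cochain n univ_half (tuple_pattern n X n x))"
proof (intro ext)
  fix x
  have "A_fun n X \<sigma> i (x j) = A_fun n univ_half \<sigma> i (tuple_pattern n X n x j)"
    if "\<sigma> permutes {1..n}" "i \<le> n" "j \<le> n" for \<sigma> i j
  proof -
    have "ind (X (\<sigma> l)) (x j) = ind (univ_half (\<sigma> l)) (tuple_pattern n X n x j)" if "l \<in> {1..n}" for l
    proof -
      have "\<sigma> l \<in> {1..n}"
        using permutes_in_image[OF \<open>\<sigma> permutes {1..n}\<close>] that by blast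
      then show ?thesis
        using \<open>j \<le> n\<close> by (simp add: tuple_pattern_def ind_univ_half_pattern)
    qed
    then show ?thesis
      using \<open>i \<le> n\<close> by (simp add: A_fun_def ind_Compl)
  qed
  then show "rhs_cochain n X x = rhs_cochain n univ_half (tuple_pattern n X n x)"
    unfolding rhs_cochain_def by (intro arg_cong2[where f = "(*)"] refl sum.cong wedge_cong) auto
qed

lemma pattern_eq_iff:
  "S \<subseteq> {1..n} \<Longrightarrow> pattern n X y = S \<longleftrightarrow> (\<forall>i\<in>{1..n}. (y \<in> X i) = (i \<in> S))"
  unfolding pattern_def by blast

lemma unsplit_tuple_pattern: "unsplit n univ_half k (tuple_pattern n X k x) \<longleftrightarrow> unsplit n X k x"
  by (auto simp: unsplit_def tuple_pattern_def pattern_def)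

lemma tuple_pattern_omit:
  "i \<le> Suc k \<Longrightarrow> tuple_pattern n X k (omit k i x) = face i (tuple_pattern n X (Suc k) x)"
  by (auto simp: tuple_pattern_def omit_def face_def fun_eq_iff)

lemma cobound_pattern_cochain:
  "cobound k (\<lambda>x. \<Phi> (tuple_pattern n X k x)) x = coboundary k \<Phi> (tuple_pattern n X (Suc k) x)"
  unfolding cobound_def coboundary_def by (intro sum.cong refl) (simp add: tuple_pattern_omit)

lemma measurable_pattern_cochain:
  fixes X :: "nat \<Rightarrow> 'a::metric_space set" and \<Phi> :: "(nat \<Rightarrow> nat set) \<Rightarrow> complex"
  assumes borel: "\<And>i. i \<in> {1..n} \<Longrightarrow> X i \<in> sets borel"
  shows "(\<lambda>x. \<Phi> (tuple_pattern n X k x)) \<in> borel_measurable (PiM {..k} (\<lambda>_. borel))"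
proof -
  let ?M = "PiM {..k} (\<lambda>_. borel :: 'a measure)"
  define P where "P = {s. \<forall>j. (j \<in> {..k} \<longrightarrow> s j \<in> Pow {1..n}) \<and> (j \<notin> {..k} \<longrightarrow> s j = {})}"
  have "finite P"
    unfolding P_def by (rule finite_set_of_finite_funs) auto
  have atom: "Measurable.pred ?M (\<lambda>x. (x j \<in> X i) = (i \<in> s j))"
    if "j \<in> {..k}" "i \<in> {1..n}" for i j s
    using that borel[OF that(2)] by (cases "i \<in> s j") simp_all
  have "tuple_pattern n X k -` {s} \<inter> space ?M \<in> sets ?M" if "s \<in> P" for s
  proof -
    have "tuple_pattern n X k x = s \<longleftrightarrow> (\<forall>j\<in>{..k}. pattern n X (x j) = s j)" for x
      using that by (auto simp: P_def tuple_pattern_def fun_eq_iff)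
    moreover have "pattern n X (x j) = s j \<longleftrightarrow> (\<forall>i\<in>{1..n}. (x j \<in> X i) = (i \<in> s j))"
      if "j \<in> {..k}" for x j
      using \<open>s \<in> P\<close> that by (intro pattern_eq_iff) (auto simp: P_def)
    ultimately have "tuple_pattern n X k -` {s} \<inter> space ?M
        = {x \<in> space ?M. \<forall>j\<in>{..k}. \<forall>i\<in>{1..n}. (x j \<in> X i) = (i \<in> s j)}"
      by auto
    also have "\<dots> \<in> sets ?M"
      unfolding pred_def[symmetric] using atom by (auto intro!: pred_intros_finite)
    finally show ?thesis .
  qed
  moreover have "tuple_pattern n X k \<in> space ?M \<rightarrow> P"
    by (auto simp: P_def tuple_pattern_def pattern_def)
  ultimately have "tuple_pattern n X k \<in> measurable ?M (count_space P)"
    by (simp add: measurable_count_space_eq2[OF \<open>finite P\<close>])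
  then show ?thesis
    by (rule measurable_compose) simp
qed

lemma bounded_tuples_subset: "bounded_tuples k S \<Longrightarrow> T \<subseteq> S \<Longrightarrow> bounded_tuples k T"
  unfolding bounded_tuples_def by blast

lemma diag_dist_less_imp_center:
  assumes "diag_dist k x < r"
  obtains z where "\<forall>l\<le>k. dist (x l) z < r"
proof -
  have bdd: "bdd_below (range (\<lambda>z. Max ((\<lambda>i. dist (x i) z) ` {..k})))"
  proof (rule bdd_belowI2[of _ 0])
    fix z
    have "dist (x 0) z \<le> Max ((\<lambda>i. dist (x i) z) ` {..k})"
      by (rule Max_ge) auto
    then show "0 \<le> Max ((\<lambda>i. dist (x i) z) ` {..k})"
      using zero_le_dist[of "x 0" z] by linarith
  qed
  obtain z where z: "Max ((\<lambda>i. dist (x i) z) ` {..k}) < r"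
    using assms cINF_less_iff[OF _ bdd] unfolding diag_dist_def by auto
  have "dist (x l) z < r" if "l \<le> k" for l
  proof -
    have "dist (x l) z \<le> Max ((\<lambda>i. dist (x i) z) ` {..k})"
      by (rule Max_ge) (use that in auto)
    then show ?thesis
      using z by linarith
  qed
  then show ?thesis
    using that by blast
qed

lemma bounded_tuples_split_near_diagonal:
  fixes X :: "nat \<Rightarrow> 'a::metric_space set"
  assumes "coarsely_transverse n X" and "0 \<le> R"
  shows "bounded_tuples k ({x \<in> tuples k. \<not> unsplit n X k x} \<inter> diag_thick k R)"
proof -
  define C where "C = (\<Inter>i\<in>{1..n}. thick (R + 1) (X i) \<inter> thick (R + 1) (- X i))"
  have "bounded C"
    using assms unfolding C_def coarsely_transverse_def by auto
  then obtain z0 B where zB: "\<And>z. z \<in> C \<Longrightarrow> dist z0 z \<le> B"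
    unfolding bounded_def by auto
  show ?thesis
    unfolding bounded_tuples_def
  proof (intro exI[of _ z0] exI[of _ "B + (R + 1)"] ballI allI impI)
    fix x j
    assume x: "x \<in> {x \<in> tuples k. \<not> unsplit n X k x} \<inter> diag_thick k R" and "j \<le> k"
    have "diag_dist k x < R + 1"
      using x by (simp add: diag_thick_def)
    then obtain z where close: "\<forall>l\<le>k. dist (x l) z < R + 1"
      by (rule diag_dist_less_imp_center)
    have "z \<in> C"
      unfolding C_def
    proof (intro INT_I IntI)
      fix i
      assume "i \<in> {1..n}"
      with x have "\<exists>j1\<le>k. x j1 \<in> X i" "\<exists>j2\<le>k. x j2 \<in> - X i"
        unfolding unsplit_def by auto
      then obtain j1 j2 where j1: "j1 \<le> k" "x j1 \<in> X i" and j2: "j2 \<le> k" "x j2 \<in> - X i"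
        by blast
      show "z \<in> thick (R + 1) (X i)"
        unfolding thick_def using j1 infdist_le[OF j1(2), of z] close j1(1) by (auto simp: dist_commute)
      show "z \<in> thick (R + 1) (- X i)"
        unfolding thick_def using j2 infdist_le[OF j2(2), of z] close j2(1) by (auto simp: dist_commute)
    qed
    then have "dist z0 z \<le> B"
      by (rule zB)
    moreover have "dist z (x j) < R + 1"
      using close \<open>j \<le> k\<close> by (simp add: dist_commute)
    ultimately show "dist z0 (x j) \<le> B + (R + 1)"
      using dist_triangle[of z0 "x j" z] by linarith
  qed
qed

lemma pattern_cochain_in_CX:
  fixes X :: "nat \<Rightarrow> 'a::metric_space set"
  assumes ct: "coarsely_transverse n X" and vanish: "\<And>t. unsplit n univ_half k t \<Longrightarrow> \<Phi> t = 0"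
  shows "(\<lambda>x. \<Phi> (tuple_pattern n X k x)) \<in> CX k"
proof -
  define P where "P = {s. \<forall>j. (j \<in> {..k} \<longrightarrow> s j \<in> Pow {1..n}) \<and> (j \<notin> {..k} \<longrightarrow> s j = {})}"
  have "finite P"
    unfolding P_def by (rule finite_set_of_finite_funs) auto
  moreover have "tuple_pattern n X k x \<in> P" for x
    by (auto simp: P_def tuple_pattern_def pattern_def)
  ultimately have bound: "norm (\<Phi> (tuple_pattern n X k x)) \<le> (\<Sum>s\<in>P. norm (\<Phi> s))" for x
    by (intro member_le_sum) auto
  have support: "bounded_tuples k (supp_cochain k (\<lambda>x. \<Phi> (tuple_pattern n X k x)) \<inter> diag_thick k R)"
    if "R > 0" for R
  proof (rule bounded_tuples_subset)
    show "bounded_tuples k ({x \<in> tuples k. \<not> unsplit n X k x} \<inter> diag_thick k R)"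
      using bounded_tuples_split_near_diagonal[OF ct] that by simp
    show "supp_cochain k (\<lambda>x. \<Phi> (tuple_pattern n X k x)) \<inter> diag_thick k R
        \<subseteq> {x \<in> tuples k. \<not> unsplit n X k x} \<inter> diag_thick k R"
      using vanish by (auto simp: supp_cochain_def simp flip: unsplit_tuple_pattern[of n k X])
  qed
  have "(\<lambda>x. \<Phi> (tuple_pattern n X k x)) \<in> borel_measurable (PiM {..k} (\<lambda>_. borel))"
    using ct by (intro measurable_pattern_cochain) (simp add: coarsely_transverse_def)
  then show ?thesis
    unfolding CX_def mem_Collect_eq using bound support
    by (intro conjI allI impI exI[of _ "\<Sum>s\<in>P. norm (\<Phi> s)"] ballI)
qed

lemma coarse_cocycle_pattern_cochain:
  fixes X :: "nat \<Rightarrow> 'a::metric_space set"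
  assumes "coarsely_transverse n X"
    and "\<And>t. unsplit n univ_half k t \<Longrightarrow> \<Phi> t = 0" and "\<And>t. coboundary k \<Phi> t = 0"
  shows "coarse_cocycle k (\<lambda>x. \<Phi> (tuple_pattern n X k x))"
  using assms by (simp add: coarse_cocycle_def pattern_cochain_in_CX cobound_pattern_cochain)

lemma determined_upto_diff:
  "determined_upto k f \<Longrightarrow> determined_upto k g \<Longrightarrow> determined_upto k (\<lambda>t. f t - g t)"
  unfolding determined_upto_def by metis

lemma pattern_flag_cocycle_coboundary:
  fixes X :: "nat \<Rightarrow> 'a::metric_space set"
  assumes "coarsely_transverse (Suc m) X" and "flag_cocycle m \<Omega>"
  shows "\<exists>\<psi>\<in>CX m. \<forall>x. \<Omega> (tuple_pattern (Suc m) X (Suc m) x) = cobound m \<psi> x"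
proof -
  obtain \<Psi> where \<Psi>: "\<And>t. unsplit (Suc m) univ_half m t \<Longrightarrow> \<Psi> t = 0"
    "\<And>t. coboundary m \<Psi> t = \<Omega> t"
    using flag_cocycle_relative_coboundary[OF assms(2)] unfolding relative_coboundary_def by blast
  have "(\<lambda>x. \<Psi> (tuple_pattern (Suc m) X m x)) \<in> CX m"
    using assms(1) \<Psi>(1) by (rule pattern_cochain_in_CX)
  moreover have "\<Omega> (tuple_pattern (Suc m) X (Suc m) x) = cobound m (\<lambda>x. \<Psi> (tuple_pattern (Suc m) X m x)) x"
    for x
    by (simp add: cobound_pattern_cochain \<Psi>(2))
  ultimately show ?thesis
    by blast
qed

lemma HX_eq_pattern_cochains:
  fixes X :: "nat \<Rightarrow> 'a::metric_space set"
  assumes ct: "coarsely_transverse n X"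
    and determined: "determined_upto n \<Phi>1" "determined_upto n \<Phi>2"
    and unsplit: "\<And>t. unsplit n univ_half n t \<Longrightarrow> \<Phi>1 t = 0" "\<And>t. unsplit n univ_half n t \<Longrightarrow> \<Phi>2 t = 0"
    and cocycle: "\<And>t. coboundary n \<Phi>1 t = 0" "\<And>t. coboundary n \<Phi>2 t = 0"
    and flags: "\<And>t. complete_flag n t \<Longrightarrow> \<Phi>1 t = \<Phi>2 t"
  shows "HX_eq n (\<lambda>x. \<Phi>1 (tuple_pattern n X n x)) (\<lambda>x. \<Phi>2 (tuple_pattern n X n x))"
proof -
  define \<Omega> where "\<Omega> = (\<lambda>t. \<Phi>1 t - \<Phi>2 t)"
  have cocycles: "coarse_cocycle n (\<lambda>x. \<Phi>1 (tuple_pattern n X n x))"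
    "coarse_cocycle n (\<lambda>x. \<Phi>2 (tuple_pattern n X n x))"
    using coarse_cocycle_pattern_cochain[OF ct] unsplit cocycle by blast+
  have \<Omega>_cocycle: "coboundary n \<Omega> t = 0" for t
    unfolding \<Omega>_def by (simp add: coboundary_diff cocycle)
  have \<Omega>_flags: "complete_flag n t \<Longrightarrow> \<Omega> t = 0" for t
    by (simp add: \<Omega>_def flags)
  show ?thesis
  proof (cases n)
    case 0
    then have "\<Omega> t = 0" for t
      using cocycle_vanishing_on_flags_0 \<Omega>_cocycle \<Omega>_flags by blast
    then show ?thesis
      using cocycles 0 by (simp add: HX_eq_def \<Omega>_def)
  next
    case (Suc m)
    have "flag_cocycle m \<Omega>"
      using determined_upto_diff[OF determined] unsplit \<Omega>_cocycle \<Omega>_flags Suc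
      unfolding \<Omega>_def by unfold_locales simp_all
    then have "\<exists>\<psi>\<in>CX (n - 1). \<forall>x. \<Omega> (tuple_pattern n X n x) = cobound (n - 1) \<psi> x"
      using pattern_flag_cocycle_coboundary ct Suc by simp
    then show ?thesis
      using cocycles Suc unfolding HX_eq_def \<Omega>_def by auto
  qed
qed

theorem proposition5p6:
  fixes X :: "nat \<Rightarrow> 'a::heine_borel set" and n :: nat
  assumes "coarsely_transverse n X"
  shows "HX_eq n
           (wedge n (\<lambda>i. if i = 0 then (\<lambda>_. 1) else ind (X i)))
           (\<lambda>x. (-1) ^ n * (\<Sum>\<sigma>\<in>{\<sigma>. \<sigma> permutes {1..n}}.
                  of_int (sign \<sigma>) * wedge n (A_fun n X \<sigma>) x))"
proof -
  have "HX_eq n (\<lambda>x. lhs_cochain n univ_half (tuple_pattern n X n x))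
      (\<lambda>x. rhs_cochain n univ_half (tuple_pattern n X n x))"
    using assms
    by (rule HX_eq_pattern_cochains)
       (simp_all add: determined_lhs_cochain determined_rhs_cochain lhs_cochain_unsplit
         rhs_cochain_unsplit coboundary_lhs_cochain coboundary_rhs_cochain
         lhs_cochain_complete_flag rhs_cochain_complete_flag)
  then show ?thesis
    unfolding lhs_cochain_pattern[symmetric] rhs_cochain_pattern[symmetric]
    by (simp add: lhs_cochain_def rhs_cochain_def)
qed

end
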